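(* Let $\Omega\subset\mathbb{R}^d$ ($d\ge2$) be compact, let $X_1,X_2,\ldots$ be i.i.d. in $\Omega$ with density $\varphi_P$, and $Y_1,Y_2,\ldots$ i.i.d. in $\Omega$ with density $\varphi_D$, all independent. For each $n$ let $l_M(Q_n)=\frac1n\min_{\sigma\in\Pi_n}\sum_{i=1}^n\|X_{\sigma(i)}-Y_i\|$. Then for every finite partition $\mathcal{C}=\{C^1,\ldots,C^{|\mathcal{C}|}\}$ of $\Omega$ into measurable cells, $$\liminf_{n\to\infty}l_M(Q_n)\ge \underline{l}(\mathcal{C})\quad\text{almost surely},$$ where $\underline{l}(\mathcal{C})$ is the optimal value of the linear program: minimize $\sum_{i,j}\alpha_{ij}\inf_{y\in C^i,x\in C^j}\|x-y\|$ over $\alpha_{ij}\ge 0$ subject to $\sum_j\alpha_{ij}=\varphi_D(C^i)$ for all $i$ and $\sum_i\alpha_{ij}=\varphi_P(C^j)$ for all $j$.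
   Context: $\Pi_n$ is the set of permutations of $\{1,\ldots,n\}$; $\|\cdot\|$ is the Euclidean norm. For a cell $C$, $\varphi_P(C)=\int_C\varphi_P(x)\,dx$ and $\varphi_D(C)=\int_C\varphi_D(y)\,dy$. The densities are densities of absolutely continuous distributions. *)

theory Defs
  imports "HOL-Probability.Probability"
begin

text \<open>Matching cost of the sample: (1/n) min over permutations sigma of {0..n-1}
  of the sum of ||X (sigma i) - Y i|| (0-based indexing of the samples).\<close>
definition matching_cost :: "(nat \<Rightarrow> 'a::real_normed_vector) \<Rightarrow> (nat \<Rightarrow> 'a) \<Rightarrow> nat \<Rightarrow> real" where
  "matching_cost x y n =
     (1 / real n) * Min {(\<Sum>i<n. norm (x (\<sigma> i) - y i)) | \<sigma>. \<sigma> permutes {..<n}}"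

definition cell_dist :: "'a::real_normed_vector set \<Rightarrow> 'a set \<Rightarrow> real" where
  "cell_dist A B = Inf {norm (x - y) | x y. y \<in> A \<and> x \<in> B}"

definition cell_mass :: "('a::euclidean_space \<Rightarrow> real) \<Rightarrow> 'a set \<Rightarrow> real" where
  "cell_mass \<phi> C = (LINT x:C|lborel. \<phi> x)"

definition lp_lower :: "nat \<Rightarrow> (nat \<Rightarrow> 'a::euclidean_space set) \<Rightarrow> ('a \<Rightarrow> real) \<Rightarrow> ('a \<Rightarrow> real) \<Rightarrow> real" where
  "lp_lower K C \<phi>P \<phi>D = Inf {(\<Sum>i<K. \<Sum>j<K. \<alpha> i j * cell_dist (C i) (C j)) | \<alpha>.
      (\<forall>i<K. \<forall>j<K. \<alpha> i j \<ge> 0) \<and>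
      (\<forall>i<K. (\<Sum>j<K. \<alpha> i j) = cell_mass \<phi>D (C i)) \<and>
      (\<forall>j<K. (\<Sum>i<K. \<alpha> i j) = cell_mass \<phi>P (C j))}"

end

theory Submission
  imports Defs
begin

text \<open>Fix an outcome for which, by the strong law of large numbers, the fraction of the \<open>X i\<close> and of
  the \<open>Y i\<close> lying in each cell converges to the mass of the cell; for these indicator variables the
  strong law follows from Hoeffding's inequality and Borel--Cantelli. An optimal matching of the
  first \<open>n\<close> points induces a transport plan between the cells whose marginals are these fractions,
  and whose cost is at most the matching cost because a matched pair costs at least the distance
  between its cells. The plans are bounded, so along any subsequence on which the matching cost
  is at most \<open>r\<close> a further subsequence of plans converges; its limit is feasible for the linear
  program and costs at most \<open>r\<close>.\<close>

definition transport_value ::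
    "nat \<Rightarrow> (nat \<Rightarrow> nat \<Rightarrow> real) \<Rightarrow> (nat \<Rightarrow> real) \<Rightarrow> (nat \<Rightarrow> real) \<Rightarrow> real" where
  "transport_value K c \<mu> \<nu> = Inf {(\<Sum>i<K. \<Sum>j<K. \<alpha> i j * c i j) | \<alpha>.
      (\<forall>i<K. \<forall>j<K. \<alpha> i j \<ge> 0) \<and>
      (\<forall>i<K. (\<Sum>j<K. \<alpha> i j) = \<mu> i) \<and>
      (\<forall>j<K. (\<Sum>i<K. \<alpha> i j) = \<nu> j)}"

lemma lp_lower_eq_transport_value:
  "lp_lower K C \<phi>P \<phi>D = transport_value K (\<lambda>i j. cell_dist (C i) (C j))
     (\<lambda>i. cell_mass \<phi>D (C i)) (\<lambda>j. cell_mass \<phi>P (C j))"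
  unfolding lp_lower_def transport_value_def ..

lemma transport_value_le:
  assumes "\<And>i j. i < K \<Longrightarrow> j < K \<Longrightarrow> 0 \<le> c i j"
    and "\<And>i j. i < K \<Longrightarrow> j < K \<Longrightarrow> 0 \<le> \<alpha> i j"
    and "\<And>i. i < K \<Longrightarrow> (\<Sum>j<K. \<alpha> i j) = \<mu> i"
    and "\<And>j. j < K \<Longrightarrow> (\<Sum>i<K. \<alpha> i j) = \<nu> j"
  shows "transport_value K c \<mu> \<nu> \<le> (\<Sum>i<K. \<Sum>j<K. \<alpha> i j * c i j)"
  unfolding transport_value_def
proof (rule cInf_lower)
  show "bdd_below {(\<Sum>i<K. \<Sum>j<K. \<alpha> i j * c i j) | \<alpha>.
      (\<forall>i<K. \<forall>j<K. \<alpha> i j \<ge> 0) \<and>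
      (\<forall>i<K. (\<Sum>j<K. \<alpha> i j) = \<mu> i) \<and> (\<forall>j<K. (\<Sum>i<K. \<alpha> i j) = \<nu> j)}"
    by (rule bdd_belowI[of _ 0]) (auto intro!: sum_nonneg mult_nonneg_nonneg assms(1))
qed (use assms(2-4) in blast)

lemma finite_family_convergent_subseq:
  fixes f :: "'i \<Rightarrow> nat \<Rightarrow> real"
  assumes "finite S" and "\<And>s n. s \<in> S \<Longrightarrow> \<bar>f s n\<bar> \<le> B"
  shows "\<exists>r. strict_mono r \<and> (\<forall>s\<in>S. convergent (\<lambda>n. f s (r n)))"
  using assms
proof (induction S rule: finite_induct)
  case empty
  show ?case by (intro exI[of _ id]) (auto simp: strict_mono_def)
next
  case (insert s S)
  then obtain r where r: "strict_mono r" "\<forall>s\<in>S. convergent (\<lambda>n. f s (r n))" by auto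
  obtain q :: "nat \<Rightarrow> nat" where q: "strict_mono q" "monoseq (\<lambda>n. f s (r (q n)))"
    using seq_monosub[of "\<lambda>n. f s (r n)"] by blast
  have "Bseq (\<lambda>n. f s (r (q n)))"
    by (rule BseqI'[of _ B]) (use insert.prems in auto)
  with q have "convergent (\<lambda>n. f s (r (q n)))" using Bseq_monoseq_convergent by blast
  moreover have "\<forall>s'\<in>S. convergent (\<lambda>n. f s' (r (q n)))"
    using convergent_subseq_convergent[OF _ q(1)] r(2) by (auto simp: comp_def)
  moreover have "strict_mono (r \<circ> q)" using r(1) q(1) by (rule strict_mono_o)
  ultimately show ?case by (intro exI[of _ "r \<circ> q"]) (auto simp: comp_def)
qed

text \<open>Bolzano--Weierstrass on the finitely many entries: the limit of a subsequence of the plans is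
  feasible for the limiting marginals.\<close>
lemma transport_value_le_of_plans:
  assumes c: "\<And>i j. i < K \<Longrightarrow> j < K \<Longrightarrow> 0 \<le> c i j"
    and nonneg: "\<And>k i j. i < K \<Longrightarrow> j < K \<Longrightarrow> 0 \<le> \<alpha> k i j"
    and bounded: "\<And>k i j. i < K \<Longrightarrow> j < K \<Longrightarrow> \<alpha> k i j \<le> B"
    and rows: "\<And>i. i < K \<Longrightarrow> (\<lambda>k. \<Sum>j<K. \<alpha> k i j) \<longlonglongrightarrow> \<mu> i"
    and cols: "\<And>j. j < K \<Longrightarrow> (\<lambda>k. \<Sum>i<K. \<alpha> k i j) \<longlonglongrightarrow> \<nu> j"
    and cost: "\<And>k. (\<Sum>i<K. \<Sum>j<K. \<alpha> k i j * c i j) \<le> r"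
  shows "transport_value K c \<mu> \<nu> \<le> r"
proof -
  obtain q where q: "strict_mono q"
    and q_conv: "\<forall>p\<in>{..<K} \<times> {..<K}. convergent (\<lambda>k. \<alpha> (q k) (fst p) (snd p))"
    using finite_family_convergent_subseq[of "{..<K} \<times> {..<K}" "\<lambda>p k. \<alpha> k (fst p) (snd p)" B]
      nonneg bounded by (force simp: abs_le_iff)
  define \<beta> where "\<beta> i j = lim (\<lambda>k. \<alpha> (q k) i j)" for i j
  have lim: "(\<lambda>k. \<alpha> (q k) i j) \<longlonglongrightarrow> \<beta> i j" if "i < K" "j < K" for i j
    using q_conv that unfolding \<beta>_def by (auto simp: convergent_LIMSEQ_iff)
  have "transport_value K c \<mu> \<nu> \<le> (\<Sum>i<K. \<Sum>j<K. \<beta> i j * c i j)"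
  proof (rule transport_value_le[OF c])
    show "0 \<le> \<beta> i j" if "i < K" "j < K" for i j
      by (rule LIMSEQ_le_const[OF lim[OF that]]) (use nonneg that in auto)
    show "(\<Sum>j<K. \<beta> i j) = \<mu> i" if "i < K" for i
    proof (rule LIMSEQ_unique)
      show "(\<lambda>k. \<Sum>j<K. \<alpha> (q k) i j) \<longlonglongrightarrow> (\<Sum>j<K. \<beta> i j)"
        by (intro tendsto_sum lim that) auto
      show "(\<lambda>k. \<Sum>j<K. \<alpha> (q k) i j) \<longlonglongrightarrow> \<mu> i"
        using LIMSEQ_subseq_LIMSEQ[OF rows[OF that] q] by (simp add: comp_def)
    qed
    show "(\<Sum>i<K. \<beta> i j) = \<nu> j" if "j < K" for j
    proof (rule LIMSEQ_unique)
      show "(\<lambda>k. \<Sum>i<K. \<alpha> (q k) i j) \<longlonglongrightarrow> (\<Sum>i<K. \<beta> i j)"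
        by (intro tendsto_sum lim that) auto
      show "(\<lambda>k. \<Sum>i<K. \<alpha> (q k) i j) \<longlonglongrightarrow> \<nu> j"
        using LIMSEQ_subseq_LIMSEQ[OF cols[OF that] q] by (simp add: comp_def)
    qed
  qed
  also have "(\<Sum>i<K. \<Sum>j<K. \<beta> i j * c i j) \<le> r"
  proof (rule LIMSEQ_le_const2)
    show "(\<lambda>k. \<Sum>i<K. \<Sum>j<K. \<alpha> (q k) i j * c i j) \<longlonglongrightarrow> (\<Sum>i<K. \<Sum>j<K. \<beta> i j * c i j)"
      by (intro tendsto_sum tendsto_mult_right lim) auto
  qed (use cost in auto)
  finally show ?thesis .
qed

lemma ereal_le_liminf_of_subseqs:
  fixes c :: "nat \<Rightarrow> real"
  assumes "\<And>r (s :: nat \<Rightarrow> nat). strict_mono s \<Longrightarrow> (\<And>k. c (s k) \<le> r) \<Longrightarrow> L \<le> r"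
  shows "ereal L \<le> liminf (\<lambda>n. ereal (c n))"
  unfolding le_Liminf_iff
proof (intro allI impI)
  fix z assume "z < ereal L"
  then obtain r where zr: "z < ereal r" and rL: "r < L" using ereal_dense2 by force
  have "eventually (\<lambda>n. r < c n) sequentially"
  proof (rule ccontr)
    assume "\<not> eventually (\<lambda>n. r < c n) sequentially"
    then have "infinite {n. c n \<le> r}"
      by (simp add: frequently_cofinite[symmetric] cofinite_eq_sequentially not_less
          not_eventually)
    then obtain s :: "nat \<Rightarrow> nat" where "strict_mono s" "\<And>k. c (s k) \<le> r"
      using infinite_enumerate by blast
    then have "L \<le> r" by (rule assms)
    with rL show False by simp
  qed
  then show "eventually (\<lambda>n. z < ereal (c n)) sequentially"
    by (rule eventually_mono) (use zr in \<open>auto intro: less_trans\<close>)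
qed

lemma cell_dist_le:
  assumes "y \<in> A" "x \<in> B"
  shows "cell_dist A B \<le> norm (x - y)"
  unfolding cell_dist_def
  by (rule cInf_lower) (use assms in \<open>auto intro!: bdd_belowI[of _ 0]\<close>)

lemma cell_dist_nonneg:
  assumes "A \<noteq> {}" "B \<noteq> {}"
  shows "0 \<le> cell_dist A B"
  unfolding cell_dist_def
  by (rule cInf_greatest) (use assms in auto)

lemma matching_cost_attained:
  obtains \<sigma> where "\<sigma> permutes {..<n}"
    and "matching_cost x y n = (\<Sum>i<n. norm (x (\<sigma> i) - y i)) / real n"
proof -
  let ?S = "{(\<Sum>i<n. norm (x (\<sigma> i) - y i)) | \<sigma>. \<sigma> permutes {..<n}}"
  have "?S = (\<lambda>\<sigma>. \<Sum>i<n. norm (x (\<sigma> i) - y i)) ` {\<sigma>. \<sigma> permutes {..<n}}" by auto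
  then have "finite ?S" using finite_permutations[of "{..<n}"] by simp
  moreover have "?S \<noteq> {}" using permutes_id[of "{..<n}"] by blast
  ultimately have "Min ?S \<in> ?S" by (rule Min_in)
  then obtain \<sigma> where "\<sigma> permutes {..<n}" "Min ?S = (\<Sum>i<n. norm (x (\<sigma> i) - y i))"
    by auto
  with that show ?thesis unfolding matching_cost_def by simp
qed

definition cell_frequency :: "'a set \<Rightarrow> (nat \<Rightarrow> 'a) \<Rightarrow> nat \<Rightarrow> real" where
  "cell_frequency A x n = (\<Sum>i<n. indicator A (x i)) / real n"

text \<open>Rows are indexed by the cell of \<open>y i\<close>, columns by the cell of its partner \<open>x (\<sigma> i)\<close>,
  matching the convention of \<open>lp_lower\<close>.\<close>
definition matching_plan ::
    "(nat \<Rightarrow> 'a set) \<Rightarrow> (nat \<Rightarrow> 'a) \<Rightarrow> (nat \<Rightarrow> 'a) \<Rightarrow> (nat \<Rightarrow> nat) \<Rightarrow> nat \<Rightarrow> nat \<Rightarrow> nat \<Rightarrow> real"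
  where
  "matching_plan C x y \<sigma> n a b =
     (\<Sum>i<n. indicator (C a) (y i) * indicator (C b) (x (\<sigma> i))) / real n"

lemma sum_indicator_partition:
  assumes "finite I" and "disjoint_family_on C I" and "z \<in> (\<Union>k\<in>I. C k)"
  shows "(\<Sum>k\<in>I. indicator (C k) z :: real) = 1"
proof -
  obtain j where "j \<in> I" "z \<in> C j" using assms(3) by auto
  with sum_indicator_disjoint_family[OF assms(2) \<open>z \<in> C j\<close> assms(1), of "\<lambda>_. 1::real"]
  show ?thesis by simp
qed

lemma matching_plan_nonneg: "0 \<le> matching_plan C x y \<sigma> n a b"
  unfolding matching_plan_def by (intro divide_nonneg_nonneg sum_nonneg) auto

lemma matching_plan_le_one: "matching_plan C x y \<sigma> n a b \<le> 1"
proof -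
  have "(\<Sum>i<n. indicator (C a) (y i) * indicator (C b) (x (\<sigma> i)) :: real) \<le> (\<Sum>i<n. 1)"
    by (intro sum_mono) (auto simp: indicator_def)
  then show ?thesis unfolding matching_plan_def by (cases "n = 0") auto
qed

lemma matching_plan_row_sum:
  assumes "disjoint_family_on C {..<K}" and "\<And>i. x i \<in> (\<Union>k<K. C k)"
  shows "(\<Sum>b<K. matching_plan C x y \<sigma> n a b) = cell_frequency (C a) y n"
proof -
  have "(\<Sum>b<K. \<Sum>i<n. indicator (C a) (y i) * indicator (C b) (x (\<sigma> i)) :: real)
      = (\<Sum>i<n. indicator (C a) (y i) * (\<Sum>b<K. indicator (C b) (x (\<sigma> i))))"
    by (subst sum.swap) (simp only: sum_distrib_left)
  also have "\<dots> = (\<Sum>i<n. indicator (C a) (y i))"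
    using sum_indicator_partition[OF _ assms] by simp
  finally show ?thesis
    unfolding matching_plan_def cell_frequency_def by (simp add: sum_divide_distrib[symmetric])
qed

lemma matching_plan_col_sum:
  assumes "disjoint_family_on C {..<K}" and "\<And>i. y i \<in> (\<Union>k<K. C k)"
    and "\<sigma> permutes {..<n}"
  shows "(\<Sum>a<K. matching_plan C x y \<sigma> n a b) = cell_frequency (C b) x n"
proof -
  have "(\<Sum>a<K. \<Sum>i<n. indicator (C a) (y i) * indicator (C b) (x (\<sigma> i)) :: real)
      = (\<Sum>i<n. (\<Sum>a<K. indicator (C a) (y i)) * indicator (C b) (x (\<sigma> i)))"
    by (subst sum.swap) (simp only: sum_distrib_right)
  also have "\<dots> = (\<Sum>i<n. indicator (C b) (x (\<sigma> i)))"
    using sum_indicator_partition[OF _ assms(1,2)] by simp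
  also have "\<dots> = (\<Sum>i<n. indicator (C b) (x i))"
    using sum.permute[OF assms(3), of "\<lambda>i. indicator (C b) (x i) :: real"] by (simp add: comp_def)
  finally show ?thesis
    unfolding matching_plan_def cell_frequency_def by (simp add: sum_divide_distrib[symmetric])
qed

lemma matching_plan_cost_le:
  fixes x y :: "nat \<Rightarrow> 'a::real_normed_vector"
  assumes "disjoint_family_on C {..<K}"
    and "\<And>i. x i \<in> (\<Union>k<K. C k)" and "\<And>i. y i \<in> (\<Union>k<K. C k)"
  shows "(\<Sum>a<K. \<Sum>b<K. matching_plan C x y \<sigma> n a b * cell_dist (C a) (C b))
           \<le> (\<Sum>i<n. norm (x (\<sigma> i) - y i)) / real n"
proof -
  define w :: "nat \<Rightarrow> nat \<Rightarrow> nat \<Rightarrow> real"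
    where "w i a b = indicator (C a) (y i) * indicator (C b) (x (\<sigma> i))" for i a b
  have "(\<Sum>a<K. \<Sum>b<K. w i a b * cell_dist (C a) (C b)) \<le> norm (x (\<sigma> i) - y i)" for i
  proof -
    have "(\<Sum>a<K. \<Sum>b<K. w i a b * cell_dist (C a) (C b))
        \<le> (\<Sum>a<K. \<Sum>b<K. w i a b * norm (x (\<sigma> i) - y i))"
      unfolding w_def by (intro sum_mono) (auto simp: indicator_def intro: cell_dist_le)
    also have "\<dots> = norm (x (\<sigma> i) - y i)
        * ((\<Sum>a<K. indicator (C a) (y i)) * (\<Sum>b<K. indicator (C b) (x (\<sigma> i))))"
      unfolding w_def sum_product by (simp only: sum_distrib_left mult_ac)
    also have "\<dots> = norm (x (\<sigma> i) - y i)"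
      using sum_indicator_partition[OF _ assms(1)] assms(2,3) by simp
    finally show ?thesis .
  qed
  then have "(\<Sum>i<n. \<Sum>a<K. \<Sum>b<K. w i a b * cell_dist (C a) (C b))
      \<le> (\<Sum>i<n. norm (x (\<sigma> i) - y i))"
    by (rule sum_mono)
  moreover have "(\<Sum>a<K. \<Sum>b<K. matching_plan C x y \<sigma> n a b * cell_dist (C a) (C b))
      = (\<Sum>a<K. \<Sum>b<K. \<Sum>i<n. w i a b * cell_dist (C a) (C b)) / real n"
    unfolding matching_plan_def w_def
    by (simp only: times_divide_eq_left sum_distrib_right sum_divide_distrib)
  moreover have "(\<Sum>a<K. \<Sum>b<K. \<Sum>i<n. w i a b * cell_dist (C a) (C b))
      = (\<Sum>i<n. \<Sum>a<K. \<Sum>b<K. w i a b * cell_dist (C a) (C b))"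
    by (subst sum.swap) (simp only: sum.swap[of _ "{..<K}" "{..<n}"])
  ultimately show ?thesis by (simp add: divide_right_mono)
qed

lemma transport_value_le_liminf_matching_cost:
  fixes x y :: "nat \<Rightarrow> 'a::real_normed_vector"
  assumes nonempty: "\<And>k. k < K \<Longrightarrow> C k \<noteq> {}"
    and disj: "disjoint_family_on C {..<K}"
    and x: "\<And>i. x i \<in> (\<Union>k<K. C k)" and y: "\<And>i. y i \<in> (\<Union>k<K. C k)"
    and freq_x: "\<And>j. j < K \<Longrightarrow> cell_frequency (C j) x \<longlonglongrightarrow> \<nu> j"
    and freq_y: "\<And>i. i < K \<Longrightarrow> cell_frequency (C i) y \<longlonglongrightarrow> \<mu> i"
  shows "ereal (transport_value K (\<lambda>i j. cell_dist (C i) (C j)) \<mu> \<nu>)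
           \<le> liminf (\<lambda>n. ereal (matching_cost x y n))"
proof (rule ereal_le_liminf_of_subseqs)
  fix r and s :: "nat \<Rightarrow> nat"
  assume s: "strict_mono s" and cost: "\<And>k. matching_cost x y (s k) \<le> r"
  have "\<exists>\<sigma>. \<forall>n. \<sigma> n permutes {..<n} \<and>
      matching_cost x y n = (\<Sum>i<n. norm (x (\<sigma> n i) - y i)) / real n"
  proof (intro choice allI)
    show "\<exists>\<tau>. \<tau> permutes {..<n} \<and> matching_cost x y n = (\<Sum>i<n. norm (x (\<tau> i) - y i)) / real n"
      for n by (rule matching_cost_attained[of n x y]) blast
  qed
  then obtain \<sigma> where \<sigma>: "\<And>n. \<sigma> n permutes {..<n}"
    and \<sigma>_cost: "\<And>n. matching_cost x y n = (\<Sum>i<n. norm (x (\<sigma> n i) - y i)) / real n"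
    by blast
  let ?\<alpha> = "\<lambda>k. matching_plan C x y (\<sigma> (s k)) (s k)"
  show "transport_value K (\<lambda>i j. cell_dist (C i) (C j)) \<mu> \<nu> \<le> r"
  proof (rule transport_value_le_of_plans[where \<alpha> = ?\<alpha> and B = 1])
    show "(\<lambda>k. \<Sum>j<K. ?\<alpha> k i j) \<longlonglongrightarrow> \<mu> i" if "i < K" for i
      using LIMSEQ_subseq_LIMSEQ[OF freq_y[OF that] s]
      by (simp add: matching_plan_row_sum[OF disj x] comp_def)
    show "(\<lambda>k. \<Sum>i<K. ?\<alpha> k i j) \<longlonglongrightarrow> \<nu> j" if "j < K" for j
      using LIMSEQ_subseq_LIMSEQ[OF freq_x[OF that] s]
      by (simp add: matching_plan_col_sum[OF disj y \<sigma>] comp_def)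
    show "(\<Sum>i<K. \<Sum>j<K. ?\<alpha> k i j * cell_dist (C i) (C j)) \<le> r" for k
      using matching_plan_cost_le[where x = x and y = y and \<sigma> = "\<sigma> (s k)" and n = "s k",
          OF disj x y] cost[of k] \<sigma>_cost[of "s k"]
      by linarith
  qed (simp_all add: cell_dist_nonneg nonempty matching_plan_nonneg matching_plan_le_one)
qed

text \<open>Hoeffding's inequality bounds the probability of a deviation \<open>\<ge> e\<close> of the average of the first
  \<open>n\<close> variables by a geometric sequence in \<open>n\<close>, so Borel--Cantelli applies.\<close>
lemma (in prob_space) bounded_iid_average_eventually_close_AE:
  fixes Z :: "'i \<Rightarrow> 'a \<Rightarrow> real" and g :: "nat \<Rightarrow> 'i"
  assumes ind: "indep_vars (\<lambda>_. borel) Z UNIV" and inj: "inj g"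
    and distr: "\<And>i. distr M borel (Z (g i)) = distr M borel (Z (g 0))"
    and bounded: "\<And>i \<omega>. \<omega> \<in> space M \<Longrightarrow> \<bar>Z (g i) \<omega>\<bar> \<le> B"
    and "e > 0"
  shows "AE \<omega> in M. eventually
           (\<lambda>n. \<bar>(\<Sum>i<n. Z (g i) \<omega>) / real n - expectation (Z (g 0))\<bar> < e) sequentially"
proof -
  define \<mu> where "\<mu> = expectation (Z (g 0))"
  define b where "b = \<bar>B\<bar> + 1"
  define I where "I n = g ` {..<Suc n}" for n
  define A where "A n = {\<omega> \<in> space M. e \<le> \<bar>(\<Sum>i\<in>I n. Z i \<omega>) / real (card (I n)) - \<mu>\<bar>}" for n
  define q where "q = exp (-2 * e\<^sup>2 / (b - - b)\<^sup>2)"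
  have [measurable]: "Z k \<in> borel_measurable M" for k
    using ind unfolding indep_vars_def by auto
  have card_I: "card (I n) = Suc n" for n
    unfolding I_def using inj by (simp add: card_image inj_on_subset)
  have sum_I: "(\<Sum>i\<in>I n. Z i \<omega>) = (\<Sum>i<Suc n. Z (g i) \<omega>)" for n \<omega>
    unfolding I_def by (subst sum.reindex) (use inj in \<open>auto intro: inj_on_subset\<close>)
  have A_measurable: "A n \<in> sets M" for n
    unfolding A_def by measurable
  have tail: "measure M (A n) \<le> 2 * q ^ Suc n" for n
  proof -
    interpret Hoeffding_ineq_iid M "I n" Z "Z (g 0)" "-b" b \<mu>
    proof unfold_locales
      show "indep_vars (\<lambda>_. borel) Z (I n)" by (rule indep_vars_subset[OF ind]) auto
      show "distr M borel (Z i) = distr M borel (Z (g 0))" if "i \<in> I n" for i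
        using that distr by (auto simp: I_def)
      show "AE x in M. Z (g 0) x \<in> {-b..b}"
      proof (rule AE_I2)
        fix \<omega> assume "\<omega> \<in> space M"
        with bounded[of \<omega> 0] show "Z (g 0) \<omega> \<in> {-b..b}" by (auto simp: b_def)
      qed
    qed (simp_all add: I_def \<mu>_def)
    have "-b < b" by (simp add: b_def)
    then have "measure M (A n) \<le> 2 * exp (-2 * real (Suc n) * e\<^sup>2 / (b - - b)\<^sup>2)"
      using Hoeffding_ineq_abs_ge'[of e] \<open>e > 0\<close> unfolding A_def card_I
      by (simp add: I_def lessThan_empty_iff)
    also have "-2 * real (Suc n) * e\<^sup>2 / (b - - b)\<^sup>2 = real (Suc n) * (-2 * e\<^sup>2 / (b - - b)\<^sup>2)"
      by (simp only: times_divide_eq_right mult_ac)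
    also have "exp (real (Suc n) * (-2 * e\<^sup>2 / (b - - b)\<^sup>2)) = q ^ Suc n"
      unfolding q_def by (rule exp_of_nat_mult)
    finally show ?thesis .
  qed
  have "q < 1" unfolding q_def b_def using \<open>e > 0\<close> by simp
  then have "summable (\<lambda>n. 2 * q ^ Suc n)" by (simp add: q_def)
  then have "summable (\<lambda>n. measure M (A n))"
    by (rule summable_comparison_test') (use tail in simp)
  then have "AE \<omega> in M. eventually (\<lambda>n. \<omega> \<in> space M - A n) sequentially"
    by (intro borel_cantelli_AE1) (simp_all add: A_measurable emeasure_eq_measure)
  then show ?thesis
  proof (rule AE_mp, intro AE_I2 impI)
    fix \<omega> assume "eventually (\<lambda>n. \<omega> \<in> space M - A n) sequentially"
    then have "eventually
        (\<lambda>n. \<bar>(\<Sum>i<Suc n. Z (g i) \<omega>) / real (Suc n) - expectation (Z (g 0))\<bar> < e) sequentially"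
      by (rule eventually_mono) (simp add: A_def sum_I card_I \<mu>_def not_le)
    then show "eventually
        (\<lambda>n. \<bar>(\<Sum>i<n. Z (g i) \<omega>) / real n - expectation (Z (g 0))\<bar> < e) sequentially"
      by (subst eventually_sequentially_Suc[symmetric])
  qed
qed

lemma (in prob_space) bounded_iid_average_tendsto_AE:
  fixes Z :: "'i \<Rightarrow> 'a \<Rightarrow> real" and g :: "nat \<Rightarrow> 'i"
  assumes "indep_vars (\<lambda>_. borel) Z UNIV" and "inj g"
    and "\<And>i. distr M borel (Z (g i)) = distr M borel (Z (g 0))"
    and "\<And>i \<omega>. \<omega> \<in> space M \<Longrightarrow> \<bar>Z (g i) \<omega>\<bar> \<le> B"
  shows "AE \<omega> in M. (\<lambda>n. (\<Sum>i<n. Z (g i) \<omega>) / real n) \<longlonglongrightarrow> expectation (Z (g 0))"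
proof -
  let ?avg = "\<lambda>\<omega> n. (\<Sum>i<n. Z (g i) \<omega>) / real n"
  have "AE \<omega> in M. \<forall>m::nat. eventually
      (\<lambda>n. \<bar>?avg \<omega> n - expectation (Z (g 0))\<bar> < inverse (Suc m)) sequentially"
    unfolding AE_all_countable
    by (intro allI bounded_iid_average_eventually_close_AE[OF assms]) auto
  then show ?thesis
  proof (rule AE_mp, intro AE_I2 impI)
    fix \<omega> assume close: "\<forall>m::nat. eventually
      (\<lambda>n. \<bar>?avg \<omega> n - expectation (Z (g 0))\<bar> < inverse (Suc m)) sequentially"
    show "?avg \<omega> \<longlonglongrightarrow> expectation (Z (g 0))"
    proof (rule tendstoI)
      fix r :: real assume "r > 0"
      then obtain m where "inverse (Suc m) < r" using reals_Archimedean by blast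
      with close[rule_format, of m]
      show "eventually (\<lambda>n. dist (?avg \<omega> n) (expectation (Z (g 0))) < r) sequentially"
        by (auto elim!: eventually_mono simp: dist_real_def)
    qed
  qed
qed

lemma (in prob_space) expectation_indicator_distributed:
  assumes "distributed M lborel X (\<lambda>x. ennreal (\<phi> x))" and "\<And>x. 0 \<le> \<phi> x"
    and [measurable]: "A \<in> sets borel"
  shows "expectation (\<lambda>\<omega>. indicator A (X \<omega>)) = cell_mass \<phi> A"
proof -
  have [measurable]: "X \<in> borel_measurable M"
    using distributed_measurable[OF assms(1)] by simp
  have "(\<integral>x. \<phi> x * indicator A x \<partial>lborel) = expectation (\<lambda>\<omega>. indicator A (X \<omega>))"
    by (rule distributed_integral[OF assms(1)]) (simp_all add: assms(2))
  then show ?thesis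
    unfolding cell_mass_def set_lebesgue_integral_def by (simp add: mult.commute)
qed

lemma distr_indicator_distributed:
  assumes "distributed M lborel X f" and [measurable]: "A \<in> sets borel"
  shows "distr M borel (\<lambda>\<omega>. indicator A (X \<omega>) :: real) = distr (density lborel f) borel (indicator A)"
proof -
  have [measurable]: "X \<in> borel_measurable M"
    using distributed_measurable[OF assms(1)] by simp
  have "distr M borel (\<lambda>\<omega>. indicator A (X \<omega>) :: real) = distr (distr M lborel X) borel (indicator A)"
    by (subst distr_distr) (simp_all add: comp_def)
  also have "distr M lborel X = density lborel f"
    using assms(1) by (rule distributed_distr_eq_density)
  finally show ?thesis .
qed

lemma (in prob_space) cell_frequency_tendsto_cell_mass_AE:
  fixes Z :: "'i \<Rightarrow> 'a \<Rightarrow> 'b::euclidean_space" and g :: "nat \<Rightarrow> 'i"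
  assumes ind: "indep_vars (\<lambda>_. borel) Z UNIV" and "inj g"
    and distributed: "\<And>i. distributed M lborel (Z (g i)) (\<lambda>x. ennreal (\<phi> x))"
    and "\<And>x. 0 \<le> \<phi> x" and [measurable]: "A \<in> sets borel"
  shows "AE \<omega> in M. cell_frequency A (\<lambda>i. Z (g i) \<omega>) \<longlonglongrightarrow> cell_mass \<phi> A"
proof -
  have "indep_vars (\<lambda>_. borel) (\<lambda>k \<omega>. indicator A (Z k \<omega>) :: real) UNIV"
    by (rule indep_vars_compose2[OF ind]) simp
  then have "AE \<omega> in M. (\<lambda>n. (\<Sum>i<n. indicator A (Z (g i) \<omega>)) / real n)
      \<longlonglongrightarrow> expectation (\<lambda>\<omega>. indicator A (Z (g 0) \<omega>))"
    by (rule bounded_iid_average_tendsto_AE[where B = 1, OF _ \<open>inj g\<close>])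
       (simp_all add: distr_indicator_distributed[OF distributed])
  then show ?thesis
    unfolding cell_frequency_def
    by (simp add: expectation_indicator_distributed[OF distributed] assms(4))
qed

theorem lemma4:
  fixes M :: "'m measure"
    and \<Omega> :: "'a::euclidean_space set"
    and X Y :: "nat \<Rightarrow> 'm \<Rightarrow> 'a"
    and \<phi>P \<phi>D :: "'a \<Rightarrow> real"
    and K :: nat
    and C :: "nat \<Rightarrow> 'a set"
  assumes "prob_space M"
    and "DIM('a) \<ge> 2"
    and "compact \<Omega>"
    and "\<And>x. \<phi>P x \<ge> 0" and "\<phi>P \<in> borel_measurable borel"
    and "\<And>x. \<phi>D x \<ge> 0" and "\<phi>D \<in> borel_measurable borel"
    and "\<And>i. distributed M lborel (X i) (\<lambda>x. ennreal (\<phi>P x))"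
    and "\<And>i. distributed M lborel (Y i) (\<lambda>x. ennreal (\<phi>D x))"
    and "\<And>i \<omega>. \<omega> \<in> space M \<Longrightarrow> X i \<omega> \<in> \<Omega>"
    and "\<And>i \<omega>. \<omega> \<in> space M \<Longrightarrow> Y i \<omega> \<in> \<Omega>"
    and "prob_space.indep_vars M (\<lambda>_. borel)
           (\<lambda>k. case k of Inl i \<Rightarrow> X i | Inr i \<Rightarrow> Y i) (UNIV :: (nat + nat) set)"
    and "\<And>k. k < K \<Longrightarrow> C k \<in> sets borel"
    and "\<And>k. k < K \<Longrightarrow> C k \<noteq> {}"
    and "\<And>k l. k < K \<Longrightarrow> l < K \<Longrightarrow> k \<noteq> l \<Longrightarrow> C k \<inter> C l = {}"
    and "(\<Union>k<K. C k) = \<Omega>"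
  shows "AE \<omega> in M. liminf (\<lambda>n. ereal (matching_cost (\<lambda>i. X i \<omega>) (\<lambda>i. Y i \<omega>) n))
                      \<ge> ereal (lp_lower K C \<phi>P \<phi>D)"
proof -
  interpret prob_space M by fact
  let ?Z = "\<lambda>k. case k of Inl i \<Rightarrow> X i | Inr i \<Rightarrow> Y i"
  have disj: "disjoint_family_on C {..<K}"
    using assms(15) by (auto simp: disjoint_family_on_def)
  have "AE \<omega> in M. j < K \<longrightarrow>
      cell_frequency (C j) (\<lambda>i. X i \<omega>) \<longlonglongrightarrow> cell_mass \<phi>P (C j) \<and>
      cell_frequency (C j) (\<lambda>i. Y i \<omega>) \<longlonglongrightarrow> cell_mass \<phi>D (C j)" for j
  proof (cases "j < K")
    case True
    have "AE \<omega> in M. cell_frequency (C j) (\<lambda>i. ?Z (Inl i) \<omega>) \<longlonglongrightarrow> cell_mass \<phi>P (C j)"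
      by (rule cell_frequency_tendsto_cell_mass_AE[OF assms(12)]) (simp_all add: assms(4,8,13) True)
    moreover have "AE \<omega> in M. cell_frequency (C j) (\<lambda>i. ?Z (Inr i) \<omega>) \<longlonglongrightarrow> cell_mass \<phi>D (C j)"
      by (rule cell_frequency_tendsto_cell_mass_AE[OF assms(12)]) (simp_all add: assms(6,9,13) True)
    ultimately show ?thesis by eventually_elim simp
  qed simp
  then have "AE \<omega> in M. \<forall>j<K.
      cell_frequency (C j) (\<lambda>i. X i \<omega>) \<longlonglongrightarrow> cell_mass \<phi>P (C j) \<and>
      cell_frequency (C j) (\<lambda>i. Y i \<omega>) \<longlonglongrightarrow> cell_mass \<phi>D (C j)"
    by (simp add: AE_all_countable)
  with AE_space show ?thesis
  proof eventually_elim
    case (elim \<omega>)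
    then show ?case
      unfolding lp_lower_eq_transport_value
      by (intro transport_value_le_liminf_matching_cost disj)
         (use assms(10,11,14,16) in auto)
  qed
qed

end
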